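(* Let $\phi$ be a scoring rule, $C=(C_1,\dots,C_K)$ with $C_k:=\mathbb{E}[Q_k\mid S_k]$, $\mathrm{GL}(S):=\mathbb{E}[d_\phi(C,Q)]$, and let $h_1,\dots,h_K:[0,1]\to\mathbb{R}$ be functions such that $\mathrm{GL}(S)=\sum_{k=1}^K\mathbb{E}[\mathrm{Var}_{h_k}(Q_k\mid S_k)]$. For each $k$ let $\mathscr{R}_k:\mathcal{X}\to\mathbb{N}$ be a partition of the feature space (write $\mathscr{R}_k$ for $\mathscr{R}_k(X)$) and let $S_{B_k}$ be a binned version of $S_k$. Define, with $T_k\in\{S_k,S_{B_k}\}$ (and writing $S$ resp. $S_B$ for the two choices), $\mathrm{GL}_{\mathrm{explained}}(\cdot):=\sum_k\mathbb{E}[\mathrm{Var}_{h_k}(\mathbb{E}[Q_k\mid T_k,\mathscr{R}_k]\mid T_k)]$, $\mathrm{GL}_{\mathrm{residual}}(\cdot):=\sum_k\mathbb{E}[\mathrm{Var}_{h_k}(Q_k\mid T_k,\mathscr{R}_k)]$, and also $\mathrm{GL}(S_B):=\sum_k\mathbb{E}[\mathrm{Var}_{h_k}(Q_k\mid S_{B_k})]$, $\mathrm{GL}_{\mathrm{induced}}(S,S_B):=\sum_k\mathbb{E}[\mathrm{Var}_{h_k}(C_k\mid S_{B_k})]$. Then: (1) $\mathrm{GL}(S)=\mathrm{GL}_{\mathrm{explained}}(S)+\mathrm{GL}_{\mathrm{residual}}(S)$; (2) $\mathrm{GL}(S_B)=\mathrm{GL}(S)+\mathrm{GL}_{\mathrm{induced}}(S,S_B)$;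 (3) $\mathrm{GL}(S)=\mathrm{GL}_{\mathrm{explained}}(S_B)-\mathrm{GL}_{\mathrm{induced}}(S,S_B)+\mathrm{GL}_{\mathrm{residual}}(S_B)$. Moreover, if every $h_k$ is convex, then $\mathrm{GL}(S)\ge\mathrm{GL}_{\mathrm{explained}}(S)\ge0$, $\mathrm{GL}_{\mathrm{induced}}(S,S_B)\ge0$, and $\mathrm{GL}(S)\ge\mathrm{GL}_{\mathrm{explained}}(S_B)-\mathrm{GL}_{\mathrm{induced}}(S,S_B)$.
   Context: Let $(X,Y)$ be jointly distributed with $X\in\mathcal{X}$ and $Y\in\{e_1,\dots,e_K\}$ (one-hot vectors of $\mathbb{R}^K$); $Q_k:=P(Y=e_k\mid X)$; $S=(S_1,\dots,S_K)=f(X)$ in the probability simplex for a classifier $f$. A scoring rule $\phi$ assigns a real number $\phi(p,e_k)$ to a score vector $p$ and label $e_k$; $s_\phi(P,q):=\sum_k\phi(P,e_k)q_k$, $d_\phi(P,q):=s_\phi(P,q)-s_\phi(q,q)$. For $f:\mathbb{R}\to\mathbb{R}$ and random variables $U,V$, $\mathrm{Var}_f(U\mid V):=\mathbb{E}[f(U)\mid V]-f(\mathbb{E}[U\mid V])$. A binned version of $S_k$: given a partition of $[0,1]$ into bins $\mathcal{B}_j$, $S_{B_k}$ equals $\mathbb{E}[S_k\mid S_k\in\mathcal{B}_j]$ on $\{S_k\in\mathcal{B}_j\}$. All required expectations are assumed to exist. *)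

theory Defs
  imports "HOL-Probability.Probability"
begin

definition cexp :: "'w measure \<Rightarrow> ('w \<Rightarrow> 'b) \<Rightarrow> 'b measure \<Rightarrow> ('w \<Rightarrow> real) \<Rightarrow> 'w \<Rightarrow> real" where
  "cexp M V N U = real_cond_exp M (vimage_algebra (space M) V N) U"

definition cvar :: "'w measure \<Rightarrow> (real \<Rightarrow> real) \<Rightarrow> ('w \<Rightarrow> real) \<Rightarrow> ('w \<Rightarrow> 'b) \<Rightarrow> 'b measure \<Rightarrow> 'w \<Rightarrow> real" where
  "cvar M h U V N \<omega> = cexp M V N (\<lambda>\<omega>'. h (U \<omega>')) \<omega> - h (cexp M V N U \<omega>)"

text \<open>Scoring rule quantities; labels are indexed by a finite type 'k (label k = one-hot e_k).\<close>
definition s_phi :: "(('k::finite \<Rightarrow> real) \<Rightarrow> 'k \<Rightarrow> real) \<Rightarrow> ('k \<Rightarrow> real) \<Rightarrow> ('k \<Rightarrow> real) \<Rightarrow> real" where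
  "s_phi phi P q = (\<Sum>k\<in>UNIV. phi P k * q k)"

definition d_phi :: "(('k::finite \<Rightarrow> real) \<Rightarrow> 'k \<Rightarrow> real) \<Rightarrow> ('k \<Rightarrow> real) \<Rightarrow> ('k \<Rightarrow> real) \<Rightarrow> real" where
  "d_phi phi P q = s_phi phi P q - s_phi phi q q"

text \<open>Binned version of T: the bins are the cells B_j = {t. idx t = j}; on the event
  {T \<in> B_j} the binned variable equals E[T | T \<in> B_j] = E[T 1_{T\<in>B_j}] / P(T \<in> B_j).\<close>
definition binned :: "'w measure \<Rightarrow> ('w \<Rightarrow> real) \<Rightarrow> (real \<Rightarrow> nat) \<Rightarrow> 'w \<Rightarrow> real" where
  "binned M T idx \<omega> =
     (let A = {\<omega>'\<in>space M. idx (T \<omega>') = idx (T \<omega>)}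
      in (\<integral>\<omega>'. indicator A \<omega>' * T \<omega>' \<partial>M) / measure M A)"

end

theory Submission
  imports Defs
begin

(* All three identities are instances of the law of total variance for Var_h: if V1 is a function
   of V2, then
     E Var_h(U | V1) = E Var_h(E[U | V2] | V1) + E Var_h(U | V2),
   which follows from E Var_h(U | V) = E h(U) - E h(E[U | V]) and the tower property. It is applied
   to the refinements (S_k, R_k) of S_k and (S_Bk, R_k) of S_Bk, and to S_k as a refinement of S_Bk
   (binning is a function of S_k).

   The inequalities are conditional Jensen. Since h_k is only convex on the closed interval [0, 1],
   it may jump at the endpoints and have unbounded slopes there, so Jensen is proved directly:
   where E[U | F] sits at an endpoint, so does U almost surely; on the bands {a <= E[U | F] <= b}
   inside (0, 1) the supporting lines have bounded slopes; and these bands exhaust the interior. *)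

(* For convex h this is the right derivative of h at x. *)
definition right_slope :: "real set \<Rightarrow> (real \<Rightarrow> real) \<Rightarrow> real \<Rightarrow> real" where
  "right_slope I h x = Inf ((\<lambda>t. (h x - h t) / (x - t)) ` ({x<..} \<inter> I))"

lemma convex_on_support_line:
  assumes "convex_on I h" "x \<in> interior I" "y \<in> I"
  shows "h x + right_slope I h x * (y - x) \<le> h y"
  unfolding right_slope_def by (rule convex_le_Inf_differential[OF assms])

lemma right_slope_mono:
  assumes h: "convex_on I h" and x: "x \<in> interior I" and y: "y \<in> interior I" and "x \<le> y"
  shows "right_slope I h x \<le> right_slope I h y"
proof (cases "x = y")
  case False
  with \<open>x \<le> y\<close> have "x < y" by simp
  have xI: "x \<in> I" using x interior_subset by blast
  have "h x + right_slope I h x * (y - x) \<le> h y"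
    using convex_on_support_line[OF h x] y interior_subset by blast
  then have "right_slope I h x \<le> (h x - h y) / (x - y)"
    using \<open>x < y\<close> by (simp add: field_simps)
  also have "\<dots> \<le> right_slope I h y"
    unfolding right_slope_def
  proof (rule cInf_greatest)
    obtain e where "e > 0" "ball y e \<subseteq> I" using y by (auto simp: mem_interior)
    then have "y + e/2 \<in> {y<..} \<inter> I" by (auto simp: dist_real_def)
    then show "(\<lambda>t. (h y - h t) / (y - t)) ` ({y<..} \<inter> I) \<noteq> {}" by blast
  next
    fix s assume "s \<in> (\<lambda>t. (h y - h t) / (y - t)) ` ({y<..} \<inter> I)"
    then obtain t where t: "t \<in> I" "y < t" and s: "s = (h y - h t) / (y - t)" by auto
    have "(h x - h y) / (x - y) \<le> (h x - h t) / (x - t)"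
      by (rule convex_on_slope_le(1)[OF h xI t(1) \<open>x < y\<close> t(2)])
    also have "\<dots> \<le> s"
      unfolding s by (rule convex_on_slope_le(2)[OF h xI t(1) \<open>x < y\<close> t(2)])
    finally show "(h x - h y) / (x - y) \<le> s" .
  qed
  finally show ?thesis .
qed simp

lemma (in finite_measure) integrable_AE_in_interval:
  fixes U :: "'a \<Rightarrow> real"
  assumes "U \<in> borel_measurable M" "AE x in M. U x \<in> {l..u}"
  shows "integrable M U"
  by (rule integrable_const_bound[where B="\<bar>l\<bar> + \<bar>u\<bar>"]) (use assms in auto)

lemma (in finite_measure_subalgebra) real_cond_exp_eq_lower_bound:
  assumes U[measurable]: "integrable M U" and c: "AE x in M. c \<le> U x"
  shows "AE x in M. real_cond_exp M F U x = c \<longrightarrow> U x = c"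
proof -
  have space_F: "space F = space M" using subalg by (simp add: subalgebra_def)
  define A where "A = {x\<in>space M. real_cond_exp M F U x = c}"
  have "A \<in> sets F" unfolding A_def space_F[symmetric] by measurable
  then have [measurable]: "A \<in> sets M" using subalg by (auto simp: subalgebra_def)
  have UA: "set_integrable M A U" "set_integrable M A (\<lambda>_. c)"
    using U integrable_mult_indicator[of A M U] integrable_mult_indicator[of A M "\<lambda>_. c"]
    by (simp_all add: set_integrable_def)
  have "(\<integral>x\<in>A. U x - c \<partial>M) = (\<integral>x\<in>A. real_cond_exp M F U x \<partial>M) - (\<integral>x\<in>A. c \<partial>M)"
    using real_cond_exp_intA[OF U \<open>A \<in> sets F\<close>] UA by simp
  also have "(\<integral>x\<in>A. real_cond_exp M F U x \<partial>M) = (\<integral>x\<in>A. c \<partial>M)"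
    by (rule set_lebesgue_integral_cong) (auto simp: A_def)
  finally have "(\<integral>x. indicator A x * (U x - c) \<partial>M) = 0"
    by (simp add: set_lebesgue_integral_def)
  moreover have "integrable M (\<lambda>x. indicator A x * (U x - c))"
    using set_integral_diff(1)[OF UA] by (simp add: set_integrable_def)
  moreover have "AE x in M. 0 \<le> indicator A x * (U x - c)"
    using c by eventually_elim (simp add: indicator_def)
  ultimately have "AE x in M. indicator A x * (U x - c) = 0"
    by (simp add: integral_nonneg_eq_0_iff_AE)
  with AE_space show ?thesis
    by eventually_elim (auto simp: A_def indicator_def)
qed

lemma (in finite_measure_subalgebra) real_cond_exp_eq_upper_bound:
  assumes U[measurable]: "integrable M U" and c: "AE x in M. U x \<le> c"
  shows "AE x in M. real_cond_exp M F U x = c \<longrightarrow> U x = c"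
proof -
  have "AE x in M. real_cond_exp M F (\<lambda>x. - U x) x = - c \<longrightarrow> - U x = - c"
    by (rule real_cond_exp_eq_lower_bound) (use U c in auto)
  moreover have "AE x in M. real_cond_exp M F (\<lambda>x. - U x) x = - real_cond_exp M F U x"
    using real_cond_exp_cmult[OF U, of "-1"] by simp
  ultimately show ?thesis by eventually_elim simp
qed

lemma (in finite_measure_subalgebra) real_cond_exp_jensen_band:
  fixes h :: "real \<Rightarrow> real"
  assumes h: "convex_on I h" and ab: "a \<le> b" "{a..b} \<subseteq> interior I"
    and U[measurable]: "integrable M U" and UI: "AE x in M. U x \<in> I"
    and hU: "integrable M (\<lambda>x. h (U x))" and hV: "integrable M (\<lambda>x. h (real_cond_exp M F U x))"
  shows "0 \<le> (\<integral>x\<in>{x\<in>space M. real_cond_exp M F U x \<in> {a..b}}. h (U x) - h (real_cond_exp M F U x) \<partial>M)"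
proof -
  have space_F: "space F = space M" using subalg by (simp add: subalgebra_def)
  define V where "V = real_cond_exp M F U"
  define B where "B = {x\<in>space M. V x \<in> {a..b}}"
  (* Clamping to [a, b] makes the slope at V a bounded, monotone (hence Borel) function of V, so
     w (U - V) below is integrable, and its integral vanishes because w is F-measurable. *)
  define psi where "psi v = right_slope I h (max a (min b v))" for v
  have psi_bounds: "right_slope I h a \<le> psi v" "psi v \<le> right_slope I h b" for v
    unfolding psi_def using ab by (auto intro!: right_slope_mono[OF h])
  have "mono psi"
    unfolding psi_def using ab by (intro monoI right_slope_mono[OF h]) auto
  then have [measurable]: "psi \<in> borel_measurable borel" by (rule borel_measurable_mono)
  have [measurable]: "V \<in> borel_measurable F" "V \<in> borel_measurable M"
    unfolding V_def by simp_all
  have B[measurable]: "B \<in> sets F"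
    unfolding B_def space_F[symmetric] by measurable
  define w where "w x = indicator B x * psi (V x)" for x
  have w[measurable]: "w \<in> borel_measurable F" unfolding w_def by measurable
  then have [measurable]: "w \<in> borel_measurable M" by (rule measurable_from_subalg[OF subalg])
  have w_bound: "\<bar>w x\<bar> \<le> \<bar>right_slope I h a\<bar> + \<bar>right_slope I h b\<bar>" for x
    using psi_bounds[of "V x"] by (auto simp: w_def indicator_def)
  have wU: "integrable M (\<lambda>x. w x * U x)"
    by (rule Bochner_Integration.integrable_bound[of M "\<lambda>x. (\<bar>right_slope I h a\<bar> + \<bar>right_slope I h b\<bar>) * U x"])
       (use U in \<open>auto simp: abs_mult intro!: mult_right_mono w_bound\<close>)
  have wV: "integrable M (\<lambda>x. w x * V x)"
    unfolding V_def by (rule real_cond_exp_intg(1)[OF wU w U[THEN borel_measurable_integrable]])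
  have "(\<integral>x. w x * (U x - V x) \<partial>M) = 0"
    using real_cond_exp_intg(2)[OF wU w U[THEN borel_measurable_integrable]] wU wV
    by (simp add: right_diff_distrib V_def)
  moreover have "(\<integral>x. w x * (U x - V x) \<partial>M) \<le> (\<integral>x. indicator B x * (h (U x) - h (V x)) \<partial>M)"
  proof (rule integral_mono_AE)
    show "AE x in M. w x * (U x - V x) \<le> indicator B x * (h (U x) - h (V x))"
      using UI
    proof eventually_elim
      case (elim x)
      show ?case
      proof (cases "x \<in> B")
        case True
        then have "V x \<in> interior I" "psi (V x) = right_slope I h (V x)"
          using ab by (auto simp: B_def psi_def max_def min_def)
        with convex_on_support_line[OF h _ elim] True show ?thesis
          by (simp add: w_def algebra_simps)
      qed (simp add: w_def)
    qed
    show "integrable M (\<lambda>x. w x * (U x - V x))"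
      using wU wV by (simp add: right_diff_distrib)
    have "B \<in> sets M" using B subalg by (auto simp: subalgebra_def)
    then show "integrable M (\<lambda>x. indicator B x * (h (U x) - h (V x)))"
      using integrable_mult_indicator[of B M "\<lambda>x. h (U x) - h (V x)"] hU hV by (simp add: V_def)
  qed
  ultimately show ?thesis
    by (simp add: set_lebesgue_integral_def B_def V_def)
qed

lemma (in finite_measure_subalgebra) real_cond_exp_jensen_interior:
  fixes h :: "real \<Rightarrow> real"
  assumes h: "convex_on {l..u} h"
    and U[measurable]: "integrable M U" and Ulu: "AE x in M. U x \<in> {l..u}"
    and hU: "integrable M (\<lambda>x. h (U x))" and hV: "integrable M (\<lambda>x. h (real_cond_exp M F U x))"
  shows "0 \<le> (\<integral>x\<in>{x\<in>space M. real_cond_exp M F U x \<in> {l<..<u}}. h (U x) - h (real_cond_exp M F U x) \<partial>M)"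
proof -
  define V where "V = real_cond_exp M F U"
  define e where "e n = 1 / real (Suc n)" for n :: nat
  define A where "A n = {x\<in>space M. V x \<in> {l + e n .. u - e n}}" for n
  have e_pos: "0 < e n" for n by (simp add: e_def)
  have [measurable]: "V \<in> borel_measurable M" unfolding V_def by simp
  have [measurable]: "A n \<in> sets M" for n unfolding A_def by measurable
  have "incseq A"
  proof (rule incseq_SucI)
    fix n
    have "e (Suc n) \<le> e n" by (simp add: e_def frac_le)
    then show "A n \<subseteq> A (Suc n)" unfolding A_def by auto
  qed
  have "(\<Union>n. A n) = {x\<in>space M. V x \<in> {l<..<u}}"
  proof (intro set_eqI iffI)
    fix x assume x: "x \<in> {x\<in>space M. V x \<in> {l<..<u}}"
    then obtain n where "inverse (real (Suc n)) < min (V x - l) (u - V x)"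
      using reals_Archimedean[of "min (V x - l) (u - V x)"] by auto
    with x show "x \<in> (\<Union>n. A n)"
      by (auto simp: A_def e_def inverse_eq_divide intro!: exI[of _ n])
  next
    fix x assume "x \<in> (\<Union>n. A n)"
    then obtain n where "x \<in> space M" "l + e n \<le> V x" "V x \<le> u - e n" by (auto simp: A_def)
    with e_pos[of n] show "x \<in> {x\<in>space M. V x \<in> {l<..<u}}" by auto
  qed
  moreover have "(\<lambda>n. \<integral>x\<in>A n. h (U x) - h (V x) \<partial>M) \<longlonglongrightarrow> (\<integral>x\<in>(\<Union>n. A n). h (U x) - h (V x) \<partial>M)"
    using integrable_mult_indicator[OF _ Bochner_Integration.integrable_diff[OF hU hV], of "\<Union>n. A n"]
    by (intro set_integral_cont_up \<open>incseq A\<close>) (auto simp: V_def set_integrable_def)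
  moreover have "0 \<le> (\<integral>x\<in>A n. h (U x) - h (V x) \<partial>M)" for n
  proof (cases "l + e n \<le> u - e n")
    case True
    moreover have "{l + e n .. u - e n} \<subseteq> interior {l..u}" using e_pos[of n] by auto
    ultimately show ?thesis unfolding A_def V_def
      by (intro real_cond_exp_jensen_band[OF h _ _ U _ hU hV]) (use Ulu in auto)
  next
    case False
    then have "A n = {}" by (auto simp: A_def)
    then show ?thesis by (simp add: set_lebesgue_integral_def)
  qed
  ultimately show ?thesis
    unfolding V_def by (metis (lifting) LIMSEQ_le_const)
qed

theorem (in finite_measure_subalgebra) real_cond_exp_jensen_closed_interval:
  fixes h :: "real \<Rightarrow> real"
  assumes h: "convex_on {l..u} h"
    and U[measurable]: "U \<in> borel_measurable M" and Ulu: "AE x in M. U x \<in> {l..u}"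
    and hU: "integrable M (\<lambda>x. h (U x))" and hV: "integrable M (\<lambda>x. h (real_cond_exp M F U x))"
  shows "(\<integral>x. h (real_cond_exp M F U x) \<partial>M) \<le> (\<integral>x. h (U x) \<partial>M)"
proof -
  define V where "V = real_cond_exp M F U"
  have [measurable]: "V \<in> borel_measurable M" "(\<lambda>x. h (U x)) \<in> borel_measurable M"
    "(\<lambda>x. h (V x)) \<in> borel_measurable M"
    using hU hV by (simp_all add: V_def)
  have intU: "integrable M U" by (rule integrable_AE_in_interval[OF U Ulu])
  have Ul: "AE x in M. l \<le> U x" and Uu: "AE x in M. U x \<le> u" using Ulu by auto
  have "AE x in M. l \<le> V x" "AE x in M. V x \<le> u"
    unfolding V_def by (rule real_cond_exp_ge_c[OF intU Ul] real_cond_exp_le_c[OF intU Uu])+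
  moreover have "AE x in M. V x = l \<longrightarrow> U x = l" "AE x in M. V x = u \<longrightarrow> U x = u"
    unfolding V_def
    by (rule real_cond_exp_eq_lower_bound[OF intU Ul] real_cond_exp_eq_upper_bound[OF intU Uu])+
  ultimately have "AE x in M. V x \<notin> {l<..<u} \<longrightarrow> U x = V x"
    by eventually_elim force
  then have "AE x in M. h (U x) - h (V x) = indicator {x\<in>space M. V x \<in> {l<..<u}} x * (h (U x) - h (V x))"
    using AE_space by eventually_elim (auto simp: indicator_def)
  then have "(\<integral>x. h (U x) - h (V x) \<partial>M) = (\<integral>x\<in>{x\<in>space M. V x \<in> {l<..<u}}. h (U x) - h (V x) \<partial>M)"
    unfolding set_lebesgue_integral_def by (intro integral_cong_AE) auto
  also have "\<dots> \<ge> 0"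
    unfolding V_def by (rule real_cond_exp_jensen_interior[OF h intU Ulu hU hV])
  finally show ?thesis
    using hU hV by (simp add: V_def)
qed

lemma subalgebra_vimage_algebra:
  assumes "V \<in> measurable M N"
  shows "subalgebra M (vimage_algebra (space M) V N)"
  unfolding subalgebra_def using sets_image_in_sets[of M "space M" V N] assms by simp

lemma subalgebra_vimage_algebra_coarser:
  assumes V2: "V2 \<in> measurable M N2" and g: "g \<in> measurable N2 N1"
    and V1: "\<And>x. x \<in> space M \<Longrightarrow> V1 x = g (V2 x)"
  shows "subalgebra (vimage_algebra (space M) V2 N2) (vimage_algebra (space M) V1 N1)"
proof -
  have "V2 \<in> measurable (vimage_algebra (space M) V2 N2) N2"
    using V2 by (intro measurable_vimage_algebra1) (auto simp: measurable_def)
  then have "(\<lambda>x. g (V2 x)) \<in> measurable (vimage_algebra (space M) V2 N2) N1"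
    using g by measurable
  then have "V1 \<in> measurable (vimage_algebra (space M) V2 N2) N1"
    by (rule measurable_cong[THEN iffD1, rotated]) (simp add: V1)
  then show ?thesis
    unfolding subalgebra_def
    using sets_image_in_sets[of "vimage_algebra (space M) V2 N2" "space M" V1 N1] by simp
qed

context finite_measure
begin

lemma finite_measure_subalgebra_vimage_algebra:
  "V \<in> measurable M N \<Longrightarrow> finite_measure_subalgebra M (vimage_algebra (space M) V N)"
  by unfold_locales (rule subalgebra_vimage_algebra)

lemma cexp_measurable [measurable]:
  assumes "V \<in> measurable M N"
  shows "cexp M V N U \<in> borel_measurable M"
proof -
  interpret finite_measure_subalgebra M "vimage_algebra (space M) V N"
    by (rule finite_measure_subalgebra_vimage_algebra[OF assms])
  show ?thesis unfolding cexp_def by simp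
qed

lemma cexp_AE_in_interval:
  assumes V: "V \<in> measurable M N" and U: "U \<in> borel_measurable M" "AE x in M. U x \<in> {l..u}"
  shows "AE x in M. cexp M V N U x \<in> {l..u}"
proof -
  interpret finite_measure_subalgebra M "vimage_algebra (space M) V N"
    by (rule finite_measure_subalgebra_vimage_algebra[OF V])
  have intU: "integrable M U" by (rule integrable_AE_in_interval[OF U])
  have "AE x in M. l \<le> cexp M V N U x"
    unfolding cexp_def by (rule real_cond_exp_ge_c[OF intU]) (use U in auto)
  moreover have "AE x in M. cexp M V N U x \<le> u"
    unfolding cexp_def by (rule real_cond_exp_le_c[OF intU]) (use U in auto)
  ultimately show ?thesis by force
qed

lemma cexp_cexp_coarser:
  assumes V2: "V2 \<in> measurable M N2" and g: "g \<in> measurable N2 N1"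
    and V1: "\<And>x. x \<in> space M \<Longrightarrow> V1 x = g (V2 x)" and U: "integrable M U"
  shows "AE x in M. cexp M V1 N1 (cexp M V2 N2 U) x = cexp M V1 N1 U x"
proof -
  have "V1 \<in> measurable M N1"
    using measurable_comp[OF V2 g] by (rule measurable_cong[THEN iffD1, rotated]) (simp add: V1)
  then interpret finite_measure_subalgebra M "vimage_algebra (space M) V1 N1"
    by (rule finite_measure_subalgebra_vimage_algebra)
  show ?thesis unfolding cexp_def
    by (rule real_cond_exp_nested_subalg[OF subalgebra_vimage_algebra[OF V2]
          subalgebra_vimage_algebra_coarser[OF V2 g V1] U])
qed

lemma integral_cvar:
  assumes V: "V \<in> measurable M N"
    and hU: "integrable M (\<lambda>x. h (U x))" and hE: "integrable M (\<lambda>x. h (cexp M V N U x))"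
  shows "(\<integral>x. cvar M h U V N x \<partial>M) = (\<integral>x. h (U x) \<partial>M) - (\<integral>x. h (cexp M V N U x) \<partial>M)"
proof -
  interpret finite_measure_subalgebra M "vimage_algebra (space M) V N"
    by (rule finite_measure_subalgebra_vimage_algebra[OF V])
  show ?thesis
    using real_cond_exp_int[OF hU] hE by (simp add: cvar_def cexp_def)
qed

(* The law of total variance for Var_h. As h need not be Borel, integrability of
   h (E[E[U | V2] | V1]) cannot be inferred from the a.e. equal h (E[U | V1]) and is assumed. *)
lemma integral_cvar_coarser:
  assumes V2: "V2 \<in> measurable M N2" and g: "g \<in> measurable N2 N1"
    and V1: "\<And>x. x \<in> space M \<Longrightarrow> V1 x = g (V2 x)" and U: "integrable M U"
    and hU: "integrable M (\<lambda>x. h (U x))"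
    and hE2: "integrable M (\<lambda>x. h (cexp M V2 N2 U x))"
    and hE1: "integrable M (\<lambda>x. h (cexp M V1 N1 U x))"
    and hE12: "integrable M (\<lambda>x. h (cexp M V1 N1 (cexp M V2 N2 U) x))"
  shows "(\<integral>x. cvar M h U V1 N1 x \<partial>M)
       = (\<integral>x. cvar M h (cexp M V2 N2 U) V1 N1 x \<partial>M) + (\<integral>x. cvar M h U V2 N2 x \<partial>M)"
proof -
  have V1_meas: "V1 \<in> measurable M N1"
    using measurable_comp[OF V2 g] by (rule measurable_cong[THEN iffD1, rotated]) (simp add: V1)
  have "(\<integral>x. h (cexp M V1 N1 (cexp M V2 N2 U) x) \<partial>M) = (\<integral>x. h (cexp M V1 N1 U x) \<partial>M)"
    using cexp_cexp_coarser[OF V2 g V1 U] by (intro integral_cong_AE) (use hE1 hE12 in auto)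
  then show ?thesis
    using integral_cvar[OF V1_meas hU hE1] integral_cvar[OF V2 hU hE2]
      integral_cvar[OF V1_meas hE2 hE12]
    by simp
qed

lemma integral_cvar_refine:
  assumes "T \<in> measurable M N1" "W \<in> measurable M N2" "integrable M U"
    and "integrable M (\<lambda>x. h (U x))"
    and "integrable M (\<lambda>x. h (cexp M (\<lambda>x. (T x, W x)) (N1 \<Otimes>\<^sub>M N2) U x))"
    and "integrable M (\<lambda>x. h (cexp M T N1 U x))"
    and "integrable M (\<lambda>x. h (cexp M T N1 (cexp M (\<lambda>x. (T x, W x)) (N1 \<Otimes>\<^sub>M N2) U) x))"
  shows "(\<integral>x. cvar M h U T N1 x \<partial>M)
       = (\<integral>x. cvar M h (cexp M (\<lambda>x. (T x, W x)) (N1 \<Otimes>\<^sub>M N2) U) T N1 x \<partial>M)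
       + (\<integral>x. cvar M h U (\<lambda>x. (T x, W x)) (N1 \<Otimes>\<^sub>M N2) x \<partial>M)"
  by (rule integral_cvar_coarser[where g=fst]) (use assms in simp_all)

lemma integral_cvar_nonneg:
  assumes V: "V \<in> measurable M N" and U: "U \<in> borel_measurable M" "AE x in M. U x \<in> {l..u}"
    and h: "convex_on {l..u} h"
    and hU: "integrable M (\<lambda>x. h (U x))" and hE: "integrable M (\<lambda>x. h (cexp M V N U x))"
  shows "0 \<le> (\<integral>x. cvar M h U V N x \<partial>M)"
proof -
  interpret finite_measure_subalgebra M "vimage_algebra (space M) V N"
    by (rule finite_measure_subalgebra_vimage_algebra[OF V])
  show ?thesis
    using real_cond_exp_jensen_closed_interval[OF h U hU] hE
    by (simp add: integral_cvar[OF V hU hE] cexp_def)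
qed

end

definition bin_mean :: "'w measure \<Rightarrow> ('w \<Rightarrow> real) \<Rightarrow> (real \<Rightarrow> nat) \<Rightarrow> nat \<Rightarrow> real" where
  "bin_mean M T idx j =
     (let A = {\<omega>\<in>space M. idx (T \<omega>) = j} in (\<integral>\<omega>. indicator A \<omega> * T \<omega> \<partial>M) / measure M A)"

lemma binned_eq_bin_mean: "binned M T idx \<omega> = bin_mean M T idx (idx (T \<omega>))"
  by (simp add: binned_def bin_mean_def)

theorem theorem3:
  fixes M :: "'w measure" and MX :: "'x measure"
    and X :: "'w \<Rightarrow> 'x" and Y :: "'w \<Rightarrow> 'k::finite"
    and f :: "'x \<Rightarrow> 'k \<Rightarrow> real"
    and phi :: "('k \<Rightarrow> real) \<Rightarrow> 'k \<Rightarrow> real"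
    and h :: "'k \<Rightarrow> real \<Rightarrow> real"
    and R :: "'k \<Rightarrow> 'x \<Rightarrow> nat"
    and bin :: "'k \<Rightarrow> real \<Rightarrow> nat"
  defines "S \<equiv> \<lambda>k \<omega>. f (X \<omega>) k"
  defines "Q \<equiv> \<lambda>k. cexp M X MX (\<lambda>\<omega>. if Y \<omega> = k then 1 else 0)"
  defines "C \<equiv> \<lambda>k. cexp M (S k) borel (Q k)"
  defines "SB \<equiv> \<lambda>k. binned M (S k) (bin k)"
  defines "QTR \<equiv> \<lambda>T k. cexp M (\<lambda>\<omega>. (T k \<omega>, R k (X \<omega>))) (borel \<Otimes>\<^sub>M count_space UNIV) (Q k)"
  defines "GL_S \<equiv> \<integral>\<omega>. d_phi phi (\<lambda>k. C k \<omega>) (\<lambda>k. Q k \<omega>) \<partial>M"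
  defines "GL_SB \<equiv> \<Sum>k\<in>UNIV. \<integral>\<omega>. cvar M (h k) (Q k) (SB k) borel \<omega> \<partial>M"
  defines "GL_exp \<equiv> \<lambda>T. \<Sum>k\<in>UNIV. \<integral>\<omega>. cvar M (h k) (QTR T k) (T k) borel \<omega> \<partial>M"
  defines "GL_res \<equiv> \<lambda>T. \<Sum>k\<in>UNIV. \<integral>\<omega>. cvar M (h k) (Q k) (\<lambda>\<omega>. (T k \<omega>, R k (X \<omega>)))
                          (borel \<Otimes>\<^sub>M count_space UNIV) \<omega> \<partial>M"
  defines "GL_ind \<equiv> \<Sum>k\<in>UNIV. \<integral>\<omega>. cvar M (h k) (C k) (SB k) borel \<omega> \<partial>M"
  assumes M: "prob_space M"
    and X_meas: "X \<in> measurable M MX"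
    and Y_meas: "Y \<in> measurable M (count_space UNIV)"
    and simplex: "\<forall>x\<in>space MX. (\<forall>k. 0 \<le> f x k) \<and> (\<Sum>k\<in>UNIV. f x k) = 1"
    and f_meas: "\<forall>k. (\<lambda>x. f x k) \<in> borel_measurable MX"
    and R_meas: "\<forall>k. R k \<in> measurable MX (count_space UNIV)"
    and bin_meas: "\<forall>k. bin k \<in> measurable borel (count_space UNIV)"
    and GL_decomp: "GL_S = (\<Sum>k\<in>UNIV. \<integral>\<omega>. cvar M (h k) (Q k) (S k) borel \<omega> \<partial>M)"
    and integr: "\<forall>k.
        integrable M (\<lambda>\<omega>. h k (Q k \<omega>)) \<and>
        integrable M (\<lambda>\<omega>. h k (C k \<omega>)) \<and>
        integrable M (\<lambda>\<omega>. h k (cexp M (SB k) borel (Q k) \<omega>)) \<and>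
        integrable M (\<lambda>\<omega>. h k (QTR S k \<omega>)) \<and>
        integrable M (\<lambda>\<omega>. h k (QTR SB k \<omega>)) \<and>
        integrable M (\<lambda>\<omega>. h k (cexp M (S k) borel (QTR S k) \<omega>)) \<and>
        integrable M (\<lambda>\<omega>. h k (cexp M (SB k) borel (QTR SB k) \<omega>)) \<and>
        integrable M (\<lambda>\<omega>. h k (cexp M (SB k) borel (C k) \<omega>))"
  shows "GL_S = GL_exp S + GL_res S
       \<and> GL_SB = GL_S + GL_ind
       \<and> GL_S = GL_exp SB - GL_ind + GL_res SB
       \<and> ((\<forall>k. convex_on {0..1} (h k)) \<longrightarrow>
            GL_S \<ge> GL_exp S \<and> GL_exp S \<ge> 0 \<and> GL_ind \<ge> 0 \<and> GL_S \<ge> GL_exp SB - GL_ind)"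
proof -
  interpret prob_space M by (rule M)
  let ?N = "borel \<Otimes>\<^sub>M count_space UNIV"
  let ?TR = "\<lambda>T k \<omega>. (T k \<omega>, R k (X \<omega>))"
  let ?GL = "\<lambda>k U V N. \<integral>\<omega>. cvar M (h k) U V N \<omega> \<partial>M"
  have [measurable]: "X \<in> measurable M MX" "Y \<in> measurable M (count_space UNIV)"
    "(\<lambda>x. f x k) \<in> borel_measurable MX" "R k \<in> measurable MX (count_space UNIV)"
    "bin k \<in> measurable borel (count_space UNIV)" for k
    using X_meas Y_meas f_meas R_meas bin_meas by auto
  have SB_factor: "SB k \<omega> = bin_mean M (S k) (bin k) (bin k (S k \<omega>))" for k \<omega>
    unfolding SB_def by (rule binned_eq_bin_mean)
  have [measurable]: "S k \<in> borel_measurable M" "SB k \<in> borel_measurable M" for k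
    unfolding SB_factor[abs_def] S_def by measurable
  have Q_meas [measurable]: "Q k \<in> borel_measurable M" and Q01: "AE \<omega> in M. Q k \<omega> \<in> {0..1}" for k
    unfolding Q_def by (measurable, rule cexp_AE_in_interval) auto
  have intQ: "integrable M (Q k)" for k by (rule integrable_AE_in_interval[OF Q_meas Q01])
  have C01: "AE \<omega> in M. C k \<omega> \<in> {0..1}" for k
    unfolding C_def by (rule cexp_AE_in_interval[OF _ Q_meas Q01]) measurable
  have QTR01: "AE \<omega> in M. QTR T k \<omega> \<in> {0..1}" if [measurable]: "T k \<in> borel_measurable M" for T k
    unfolding QTR_def by (rule cexp_AE_in_interval[OF _ Q_meas Q01]) measurable
  have refine: "?GL k (Q k) (S k) borel = ?GL k (QTR S k) (S k) borel + ?GL k (Q k) (?TR S k) ?N"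
    "?GL k (Q k) (SB k) borel = ?GL k (QTR SB k) (SB k) borel + ?GL k (Q k) (?TR SB k) ?N" for k
    unfolding QTR_def
    by (rule integral_cvar_refine; use integr intQ in \<open>simp add: QTR_def C_def\<close>)+
  have coarsen: "?GL k (Q k) (SB k) borel = ?GL k (C k) (SB k) borel + ?GL k (Q k) (S k) borel" for k
    unfolding C_def
    by (rule integral_cvar_coarser[where g="\<lambda>t. bin_mean M (S k) (bin k) (bin k t)"])
       (use integr intQ SB_factor in \<open>simp_all add: C_def\<close>)
  have "GL_S = GL_exp S + GL_res S"
    unfolding GL_decomp GL_exp_def GL_res_def by (simp only: refine flip: sum.distrib)
  moreover have "GL_SB = GL_S + GL_ind"
    unfolding GL_decomp GL_SB_def GL_ind_def by (simp only: coarsen add.commute flip: sum.distrib)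
  moreover have "GL_SB = GL_exp SB + GL_res SB"
    unfolding GL_SB_def GL_exp_def GL_res_def by (simp only: refine flip: sum.distrib)
  moreover have "GL_res S \<ge> 0" "GL_exp S \<ge> 0" "GL_ind \<ge> 0" "GL_res SB \<ge> 0"
    if "\<forall>k. convex_on {0..1} (h k)"
    unfolding GL_res_def GL_exp_def GL_ind_def
    by (intro sum_nonneg integral_cvar_nonneg[where l=0 and u=1];
        use that integr Q01 C01 QTR01 in \<open>simp_all add: C_def QTR_def\<close>)+
  ultimately show ?thesis by force
qed

end
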